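(* Let $g\ge 1$, let $\mathfrak{m}_g$ be a rooted unicellular map of genus $g$, and let $\mathfrak{p}=((\mathfrak{m}_{g},\tau),(\mathfrak{m}_{g_1},\tau_1),\ldots,(\mathfrak{m}_{g_{r-1}},\tau_{r-1}),(\mathfrak{m}_0,\varnothing))$ be a blueprint of $\mathfrak{m}_g$ consisting of $r$ slicings. Then $1\le r\le g$, and the planar tree $\mathfrak{m}_0$ equipped with the induced vertex labels $(\sigma_v)_v$, $\sigma_v\in\mathbb{F}_2^r$ (defined in the context), is a $\lambda$-tree. In particular, $(\mathfrak{m}_g,\mathfrak{p})$ induces a unique $\lambda$-tree $\mathfrak{m}_0^{(\sigma_v)_v}$.
   Context: A rooted unicellular map with $m$ edges is given by permutations $\sigma$, $\alpha$ on the half-edge set $H=[2m]$, where $\alpha$ is a fixed-point-free involution (edges), the cycles of $\sigma$ are the vertices (with $\sigma$ encoding counterclockwise rotation around a vertex), and $\gamma=\alpha\circ\sigma$ has exactly one cycle (the boundary component); one half-edge is distinguished as the root. Its genus $g$ is given by $v-m+1=2-2g$, $v$ the number of vertices; genus $0$ means a rooted planar tree. The order $<_\gamma$ on half-edges is the order of appearance along the cycle $\gamma$ starting from the root; vertices are compared via their $<_\gamma$-minimal half-edges. A trisection is a half-edge $\tau$ with $\tau\le_\gamma\sigma^{-1}(\tau)$ which is not the $<_\gamma$-minimal half-edge of its vertex; a map of genus $g$ has exactly $2g$ trisections. Slicing (Chapuy, "A new combinatorial identity for unicellular maps, via a direct bijective approach", 2011): given a unicellular map $\mathfrak{m}$ of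 genus $g'$ and a trisection $\tau$, Chapuy's slicing map $\Xi$ yields $\Xi(\mathfrak{m},\tau)=(\mathfrak{m}',v_1,\ldots,v_{2k+1})$, where $k\ge 1$, $\mathfrak{m}'$ is a unicellular map of genus $g'-k$, and $v_1,\ldots,v_{2k+1}$ are the vertices of $\mathfrak{m}'$ created by slicing the vertex of $\tau$, ordered by $<_\gamma$; $\Xi$ is a bijection whose inverse is the gluing map $\Lambda$. A blueprint of $(\mathfrak{m}_g,\tau)$ is a sequence $((\mathfrak{m}_{g},\tau),(\mathfrak{m}_{g_1},\tau_1),\ldots,(\mathfrak{m}_{g_{r-1}},\tau_{r-1}),(\mathfrak{m}_0,\varnothing))$ where each $\tau_i$ is a trisection of $\mathfrak{m}_{g_i}$ ($\mathfrak{m}_{g_0}=\mathfrak{m}_g,\tau_0=\tau$), $(\mathfrak{m}_{g_{i+1}},V_{i+1})=\Xi(\mathfrak{m}_{g_i},\tau_i)$ for $0\le i<r$ ($V_{i+1}$ the set of created vertices; this is the $(i+1)$-st slicing), and $\mathfrak{m}_{g_r}=\mathfrak{m}_0$ has genus $0$. A blueprint of $\mathfrak{m}_g$ is a blueprint of $(\mathfrak{m}_g,\tau)$ for some trisection $\tau$. Induced labels: a vertex of $\mathfrak{m}_0$ is involved in the $s$-th slicing if it is one of the vertices of $V_s$ or arises from one of them by later slicings. First give each vertex $v$ of $\mathfrak{m}_0$ the label $\sigma'_v\in\mathbb{F}_2^r$ whose $s$-th coordinate is $1$ iff $v$ is involved in the $s$-th slicing. Then reduce: for $i=r,r-1,\ldots,2$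 in turn, for every vertex $v$ with $\sigma_v|_i=1$ that is not the $<_\gamma$-minimal vertex among the vertices $u$ with $\sigma_u|_i=1$ ("regular at $i$"), set $\sigma_v|_h=0$ for all $h<i$; the resulting labels are $(\sigma_v)_v$. $\lambda$-tree: a rooted planar tree with boundary component $\gamma$ in which each vertex $v$ carries a label $\sigma_v\in\mathbb{F}_2^r$ such that (i) $\sum_{v,h}\sigma_v|_h=2g+r$ (counting the entries equal to $1$), where $1\le r\le g$; (ii) for each $h$, the number of vertices $v$ with $\sigma_v|_h=1$ is odd; (iii) for $h<i$, at most one vertex $v$ has $\sigma_v|_h=\sigma_v|_i=1$, and any such vertex is $<_\gamma$-minimal among all vertices $u$ with $\sigma_u|_i=1$. *)

theory Defs
  imports "HOL-Combinatorics.Permutations"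
begin

text \<open>A map with n edges: half-edge set H = {1..2n}, vertex permutation sig,
  edge involution alp, root half-edge.\<close>

record umap =
  edges :: nat
  sig :: "nat \<Rightarrow> nat"
  alp :: "nat \<Rightarrow> nat"
  root :: nat

definition hset :: "umap \<Rightarrow> nat set" where
  "hset m = {1..2 * edges m}"

definition face :: "umap \<Rightarrow> nat \<Rightarrow> nat" where
  "face m = alp m \<circ> sig m"

definition unicellular :: "umap \<Rightarrow> bool" where
  "unicellular m \<longleftrightarrow>
     sig m permutes hset m \<and> alp m permutes hset m \<and>
     (\<forall>h\<in>hset m. alp m h \<noteq> h \<and> alp m (alp m h) = h) \<and>
     root m \<in> hset m \<and>
     (\<forall>h\<in>hset m. \<exists>j. (face m ^^ j) (root m) = h)"

definition vtx :: "umap \<Rightarrow> nat \<Rightarrow> nat set" where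
  "vtx m h = {(sig m ^^ j) h | j. True}"

definition vertices :: "umap \<Rightarrow> nat set set" where
  "vertices m = vtx m ` hset m"

text \<open>Genus from Euler's formula  v - n + 1 = 2 - 2g.\<close>
definition genus :: "umap \<Rightarrow> nat" where
  "genus m = (edges m + 1 - card (vertices m)) div 2"

text \<open>Position along the boundary cycle, starting from the root (order <_gamma).\<close>
definition pos :: "umap \<Rightarrow> nat \<Rightarrow> nat" where
  "pos m h = (LEAST j. (face m ^^ j) (root m) = h)"

definition vpos :: "umap \<Rightarrow> nat set \<Rightarrow> nat" where
  "vpos m V = Min (pos m ` V)"

definition trisection :: "umap \<Rightarrow> nat \<Rightarrow> bool" where
  "trisection m t \<longleftrightarrow> t \<in> hset m \<and> pos m t \<le> pos m (inv (sig m) t) \<and>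
     (\<exists>h\<in>vtx m t. pos m h < pos m t)"

text \<open>Properties of Chapuy's slicing map Xi(m,tau) = (m', [v_1,...,v_{2k+1}]):
  k >= 1, m' unicellular of genus g'-k on the same half-edges/edges/root,
  v_1 < ... < v_{2k+1} (by <_gamma of m') are the vertices of m' created by
  slicing the vertex of tau; all other vertices are unchanged.\<close>
definition slicing_map :: "(umap \<Rightarrow> nat \<Rightarrow> umap \<times> nat set list) \<Rightarrow> bool" where
  "slicing_map Xi \<longleftrightarrow>
    (\<forall>m t. unicellular m \<and> trisection m t \<longrightarrow>
      (case Xi m t of (m', vs) \<Rightarrow>
        (\<exists>k\<ge>1. unicellular m' \<and> edges m' = edges m \<and> alp m' = alp m \<and>
          root m' = root m \<and> genus m' + k = genus m \<and>
          length vs = 2 * k + 1 \<and> distinct vs \<and> set vs \<subseteq> vertices m' \<and>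
          \<Union> (set vs) = vtx m t \<and>
          vertices m' = (vertices m - {vtx m t}) \<union> set vs \<and>
          sorted_wrt (\<lambda>u w. vpos m' u < vpos m' w) vs)))"

text \<open>ms = [m_g, m_{g_1}, ..., m_0], ts = [tau, tau_1, ..., tau_{r-1}],
  Vs ! (s-1) = list of created vertices of the s-th slicing; r = length ts.\<close>
definition blueprint ::
  "(umap \<Rightarrow> nat \<Rightarrow> umap \<times> nat set list) \<Rightarrow> umap \<Rightarrow> umap list \<Rightarrow> nat list \<Rightarrow> nat set list list \<Rightarrow> bool" where
  "blueprint Xi m ms ts Vs \<longleftrightarrow>
     length ts \<ge> 1 \<and> length ms = length ts + 1 \<and> length Vs = length ts \<and>
     ms ! 0 = m \<and>
     (\<forall>i < length ts. trisection (ms ! i) (ts ! i) \<and>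
        Xi (ms ! i) (ts ! i) = (ms ! Suc i, Vs ! i)) \<and>
     genus (ms ! length ts) = 0"

text \<open>Labels in F_2^r are represented as predicates on coordinates 1..r.\<close>
definition raw_labels :: "nat set list list \<Rightarrow> nat set \<Rightarrow> nat \<Rightarrow> bool" where
  "raw_labels Vs v s \<longleftrightarrow> s \<in> {1..length Vs} \<and> (\<exists>w\<in>set (Vs ! (s - 1)). v \<subseteq> w)"

definition regular_at :: "umap \<Rightarrow> (nat set \<Rightarrow> nat \<Rightarrow> bool) \<Rightarrow> nat \<Rightarrow> nat set \<Rightarrow> bool" where
  "regular_at m lab i v \<longleftrightarrow> lab v i \<and>
     (\<exists>u\<in>vertices m. lab u i \<and> vpos m u < vpos m v)"

definition red_step :: "umap \<Rightarrow> nat \<Rightarrow> (nat set \<Rightarrow> nat \<Rightarrow> bool) \<Rightarrow> nat set \<Rightarrow> nat \<Rightarrow> bool" where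
  "red_step m i lab = (\<lambda>v h. if regular_at m lab i v \<and> h < i then False else lab v h)"

text \<open>red_from m lab i applies the reduction steps i, i-1, ..., 2 in turn.\<close>
fun red_from :: "umap \<Rightarrow> (nat set \<Rightarrow> nat \<Rightarrow> bool) \<Rightarrow> nat \<Rightarrow> nat set \<Rightarrow> nat \<Rightarrow> bool" where
  "red_from m lab 0 = lab"
| "red_from m lab (Suc i) =
     (if Suc i < 2 then lab else red_from m (red_step m (Suc i) lab) i)"

definition induced_labels :: "umap \<Rightarrow> nat set list list \<Rightarrow> nat set \<Rightarrow> nat \<Rightarrow> bool" where
  "induced_labels m0 Vs = red_from m0 (raw_labels Vs) (length Vs)"

definition lambda_tree :: "nat \<Rightarrow> nat \<Rightarrow> umap \<Rightarrow> (nat set \<Rightarrow> nat \<Rightarrow> bool) \<Rightarrow> bool" where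
  "lambda_tree g r m lab \<longleftrightarrow>
     unicellular m \<and> genus m = 0 \<and> 1 \<le> r \<and> r \<le> g \<and>
     (\<Sum>v\<in>vertices m. card {h\<in>{1..r}. lab v h}) = 2 * g + r \<and>
     (\<forall>h\<in>{1..r}. odd (card {v\<in>vertices m. lab v h})) \<and>
     (\<forall>h i. 1 \<le> h \<and> h < i \<and> i \<le> r \<longrightarrow>
        card {v\<in>vertices m. lab v h \<and> lab v i} \<le> 1 \<and>
        (\<forall>v\<in>vertices m. lab v h \<and> lab v i \<longrightarrow>
           (\<forall>u\<in>vertices m. lab u i \<longrightarrow> vpos m v \<le> vpos m u)))"

end

theory Submission
  imports Defs "HOL-Combinatorics.Orbits"
begin

text \<open>
  A slicing that lowers the genus by k \<ge> 1 creates 2k+1 vertices, so a blueprint has r \<le> g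
  slicings which create 2g+r vertices in total. Every vertex of an intermediate map is a union of
  vertices of the final tree (its leaves). The reduction at coordinate i+1 keeps the labels at
  coordinates \<le> i only on the <_gamma-first leaf labelled i+1; inductively, after the
  reductions at r, ..., j+1, below every vertex of the j-th map a single leaf carries labels at
  coordinates \<le> j. Consequently the leaves labelled s correspond bijectively to the vertices
  created by the s-th slicing, giving odd counts with total 2g+r. Condition (iii) for h < i is
  established by the reduction at i and survives the later reductions, which only erase labels
  and leave coordinate i untouched.
\<close>

lemma sig_permutation: "unicellular m \<Longrightarrow> permutation (sig m)"
  unfolding unicellular_def hset_def by (auto intro: permutation_permutes[THEN iffD2])

lemma vtx_eq_orbit: "unicellular m \<Longrightarrow> vtx m h = orbit (sig m) h"
  by (simp add: vtx_def orbit_altdef_permutation sig_permutation)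

lemma vtx_eqI: "unicellular m \<Longrightarrow> a \<in> vtx m h \<Longrightarrow> vtx m a = vtx m h"
  by (simp add: vtx_eq_orbit orbit_cyclic_eq3 cyclic_on_orbit' sig_permutation)

lemma vtx_subset_hset: "unicellular m \<Longrightarrow> h \<in> hset m \<Longrightarrow> vtx m h \<subseteq> hset m"
  by (simp add: vtx_eq_orbit permutes_orbit_subset unicellular_def)

lemma vertices_disjoint:
  assumes "unicellular m" "V \<in> vertices m" "W \<in> vertices m" "V \<noteq> W"
  shows "V \<inter> W = {}"
  using assms vtx_eqI[OF assms(1)] unfolding vertices_def by blast

lemma vertex_nonempty: "V \<in> vertices m \<Longrightarrow> V \<noteq> {}"
  unfolding vertices_def vtx_def by blast

lemma finite_vertices: "finite (vertices m)"
  by (simp add: vertices_def hset_def)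

lemma finite_vertex: "unicellular m \<Longrightarrow> V \<in> vertices m \<Longrightarrow> finite V"
  unfolding vertices_def using vtx_subset_hset finite_subset by (fastforce simp: hset_def)

lemma pos_in_boundary:
  assumes "unicellular m" "h \<in> hset m"
  shows "(face m ^^ pos m h) (root m) = h"
proof -
  have "\<exists>j. (face m ^^ j) (root m) = h"
    using assms unfolding unicellular_def by blast
  then show ?thesis unfolding pos_def by (rule LeastI_ex)
qed

lemma inj_on_pos: "unicellular m \<Longrightarrow> inj_on (pos m) (hset m)"
  by (rule inj_onI) (metis pos_in_boundary)

lemma vpos_attained:
  assumes "unicellular m" "V \<in> vertices m"
  obtains h where "h \<in> V" "vpos m V = pos m h"
proof -
  have "Min (pos m ` V) \<in> pos m ` V"
    using finite_vertex[OF assms] vertex_nonempty[OF assms(2)] by simp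
  then show thesis using that unfolding vpos_def by blast
qed

lemma inj_on_vpos: "unicellular m \<Longrightarrow> inj_on (vpos m) (vertices m)"
proof (rule inj_onI)
  fix V W assume m: "unicellular m" and VW: "V \<in> vertices m" "W \<in> vertices m" "vpos m V = vpos m W"
  obtain a b where ab: "a \<in> V" "b \<in> W" "pos m a = pos m b"
    using vpos_attained[OF m VW(1)] vpos_attained[OF m VW(2)] VW(3) by metis
  moreover have "V \<subseteq> hset m" "W \<subseteq> hset m"
    using VW vtx_subset_hset[OF m] unfolding vertices_def by auto
  ultimately have "a = b" using inj_on_pos[OF m] by (auto dest: inj_onD)
  then show "V = W" using vertices_disjoint[OF m VW(1,2)] ab by blast
qed

lemma first_labelled_vertex:
  assumes "unicellular m" "u \<in> vertices m" "lab u i"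
  obtains \<rho> where "\<rho> \<in> vertices m" "lab \<rho> i"
    "\<And>v. v \<in> vertices m \<Longrightarrow> lab v i \<Longrightarrow> regular_at m lab i v \<longleftrightarrow> v \<noteq> \<rho>"
proof -
  let ?L = "{v \<in> vertices m. lab v i}"
  define \<rho> where "\<rho> = arg_min_on (vpos m) ?L"
  have "finite ?L" "?L \<noteq> {}" using assms(2,3) finite_vertices by auto
  then have \<rho>: "\<rho> \<in> ?L" "\<not> (\<exists>v\<in>?L. vpos m v < vpos m \<rho>)"
    unfolding \<rho>_def by (rule arg_min_if_finite)+
  have "regular_at m lab i v \<longleftrightarrow> v \<noteq> \<rho>" if v: "v \<in> ?L" for v
  proof
    assume "regular_at m lab i v"
    then show "v \<noteq> \<rho>" using \<rho>(2) unfolding regular_at_def by blast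
  next
    assume "v \<noteq> \<rho>"
    then have "vpos m v \<noteq> vpos m \<rho>" using inj_on_vpos[OF assms(1)] v \<rho>(1) by (auto dest: inj_onD)
    then have "vpos m \<rho> < vpos m v" using \<rho>(2) v by fastforce
    then show "regular_at m lab i v" using v \<rho>(1) unfolding regular_at_def by blast
  qed
  with \<rho>(1) show thesis by (intro that) auto
qed

lemma sum_card_filter_swap:
  assumes "finite A" "finite B"
  shows "(\<Sum>a\<in>A. card {b\<in>B. Q a b}) = (\<Sum>b\<in>B. card {a\<in>A. Q a b})"
  using sum.swap[where g="\<lambda>a b. if Q a b then 1::nat else 0" and A=A and B=B] assms
  by (simp add: sum.If_cases Int_def conj_commute)

definition overlap_minimal :: "umap \<Rightarrow> (nat set \<Rightarrow> nat \<Rightarrow> bool) \<Rightarrow> nat \<Rightarrow> nat \<Rightarrow> bool" where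
  "overlap_minimal m lab h i \<longleftrightarrow> card {v\<in>vertices m. lab v h \<and> lab v i} \<le> 1 \<and>
     (\<forall>v\<in>vertices m. lab v h \<and> lab v i \<longrightarrow>
        (\<forall>u\<in>vertices m. lab u i \<longrightarrow> vpos m v \<le> vpos m u))"

lemma red_step_below:
  "s < i \<Longrightarrow> red_step m i lab v s \<longleftrightarrow> lab v s \<and> \<not> regular_at m lab i v"
  by (simp add: red_step_def)

lemma red_step_above: "\<not> s < i \<Longrightarrow> red_step m i lab v s = lab v s"
  by (simp add: red_step_def)

lemma red_step_le: "red_step m i lab v s \<Longrightarrow> lab v s"
  by (simp add: red_step_def split: if_splits)

lemma overlap_minimal_mono:
  assumes "overlap_minimal m lab h i" "\<And>v s. lab' v s \<Longrightarrow> lab v s" "\<And>v. lab' v i = lab v i"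
  shows "overlap_minimal m lab' h i"
proof -
  have "card {v\<in>vertices m. lab' v h \<and> lab' v i} \<le> card {v\<in>vertices m. lab v h \<and> lab v i}"
    using assms(2) finite_vertices by (intro card_mono) auto
  moreover have "vpos m v \<le> vpos m u"
    if "v \<in> vertices m" "lab' v h" "lab' v i" "u \<in> vertices m" "lab' u i" for u v
    using assms that unfolding overlap_minimal_def by blast
  ultimately show ?thesis using assms(1) unfolding overlap_minimal_def by (meson order.trans)
qed

lemma overlap_minimal_red_step:
  assumes "unicellular m" "h < i"
  shows "overlap_minimal m (red_step m i lab) h i"
proof -
  let ?lab = "red_step m i lab"
  have first: "vpos m v \<le> vpos m u"
    if "v \<in> vertices m" "?lab v h" "?lab v i" "u \<in> vertices m" "?lab u i" for u v
    using that assms(2) by (auto simp: red_step_def regular_at_def not_less split: if_splits)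
  have "a = b" if "a \<in> {v\<in>vertices m. ?lab v h \<and> ?lab v i}" "b \<in> {v\<in>vertices m. ?lab v h \<and> ?lab v i}"
    for a b
    using first[of a b] first[of b a] that inj_on_vpos[OF assms(1)] by (auto dest: inj_onD)
  then have "card {v\<in>vertices m. ?lab v h \<and> ?lab v i} \<le> 1"
    using finite_vertices by (auto simp: card_le_Suc0_iff_eq)
  with first show ?thesis unfolding overlap_minimal_def by blast
qed

lemma red_from_induct:
  assumes "1 \<le> n" "Q n lab"
    "\<And>j lab. 1 \<le> j \<Longrightarrow> j < n \<Longrightarrow> Q (Suc j) lab \<Longrightarrow> Q j (red_step m (Suc j) lab)"
  shows "Q 1 (red_from m lab n)"
  using assms
proof (induction n arbitrary: lab)
  case (Suc n)
  then show ?case by (cases "n = 0") auto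
qed simp

text \<open>
  Vertices are sets of half-edges, and the i-th slicing replaces the vertex sliced i of M i by
  the vertices Vs!i partitioning it. So every vertex of M j is a union of leaves, the vertices
  of the final tree M r.
\<close>
locale blueprint_seq =
  fixes Xi :: "umap \<Rightarrow> nat \<Rightarrow> umap \<times> nat set list"
    and ms :: "umap list" and ts :: "nat list" and Vs :: "nat set list list"
  assumes slicing: "slicing_map Xi"
    and unicellular_first: "unicellular (ms ! 0)"
    and blueprint: "blueprint Xi (ms ! 0) ms ts Vs"
begin

abbreviation "r \<equiv> length ts"
abbreviation "M i \<equiv> ms ! i"
abbreviation "leaves \<equiv> vertices (M r)"
abbreviation "sliced i \<equiv> vtx (M i) (ts ! i)"

lemma length_Vs: "length Vs = r"
  using blueprint unfolding blueprint_def by simp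

lemma one_le_length_ts: "1 \<le> r"
  using blueprint unfolding blueprint_def by simp

lemma genus_last: "genus (M r) = 0"
  using blueprint unfolding blueprint_def by simp

lemma slicing_step_unicellular:
  assumes "i < r" "unicellular (M i)"
  shows "\<exists>k\<ge>1. unicellular (M (Suc i)) \<and> genus (M (Suc i)) + k = genus (M i) \<and>
     length (Vs!i) = 2*k+1 \<and> distinct (Vs!i) \<and> set (Vs!i) \<subseteq> vertices (M (Suc i)) \<and>
     \<Union> (set (Vs!i)) = sliced i \<and>
     vertices (M (Suc i)) = (vertices (M i) - {sliced i}) \<union> set (Vs!i) \<and>
     sliced i \<in> vertices (M i)"
proof -
  have t: "trisection (M i) (ts!i)" and e: "Xi (M i) (ts!i) = (M (Suc i), Vs!i)"
    using blueprint assms(1) unfolding blueprint_def by auto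
  then have "sliced i \<in> vertices (M i)" unfolding trisection_def vertices_def by auto
  with slicing[unfolded slicing_map_def, rule_format, OF conjI[OF assms(2) t]] e show ?thesis
    by auto
qed

lemma unicellular_M: "i \<le> r \<Longrightarrow> unicellular (M i)"
proof (induction i)
  case (Suc i)
  then have "i < r" "unicellular (M i)" by auto
  then show ?case using slicing_step_unicellular by blast
qed (rule unicellular_first)

lemma slicing_step:
  assumes "i < r"
  obtains k where "k \<ge> 1" "genus (M (Suc i)) + k = genus (M i)" "length (Vs!i) = 2*k+1"
    "distinct (Vs!i)" "set (Vs!i) \<subseteq> vertices (M (Suc i))" "\<Union> (set (Vs!i)) = sliced i"
    "vertices (M (Suc i)) = (vertices (M i) - {sliced i}) \<union> set (Vs!i)" "sliced i \<in> vertices (M i)"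
  using slicing_step_unicellular[OF assms unicellular_M] assms by auto

lemma created_count_genus:
  "n \<le> r \<Longrightarrow> (\<Sum>i<n. length (Vs!i)) + 2 * genus (M n) = 2 * genus (M 0) + n \<and>
     n + genus (M n) \<le> genus (M 0)"
proof (induction n)
  case (Suc n)
  then obtain k where "k \<ge> 1" "genus (M (Suc n)) + k = genus (M n)" "length (Vs!n) = 2*k+1"
    using slicing_step[of n] by (metis Suc_le_lessD)
  with Suc show ?case by auto
qed simp

lemma vertices_M_disjoint:
  "j \<le> r \<Longrightarrow> v \<in> vertices (M j) \<Longrightarrow> w \<in> vertices (M j) \<Longrightarrow> v \<noteq> w \<Longrightarrow> v \<inter> w = {}"
  using vertices_disjoint unicellular_M by blast

lemma vertex_refines:
  assumes "i < r" "x \<in> vertices (M (Suc i))"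
  shows "\<exists>w\<in>vertices (M i). x \<subseteq> w"
  using assms by (cases rule: slicing_step[OF assms(1)]) auto

lemma leaf_below_vertex:
  assumes "j \<le> r" "v \<in> leaves"
  shows "\<exists>x\<in>vertices (M j). v \<subseteq> x"
  using assms(1)
proof (induction rule: inc_induct)
  case (step n)
  then show ?case using vertex_refines[of n] by (meson order.trans)
qed (use assms(2) in blast)

lemma leaf_below_created_iff:
  assumes "i < r" "v \<in> leaves"
  shows "(\<exists>z\<in>set (Vs!i). v \<subseteq> z) \<longleftrightarrow> v \<subseteq> sliced i"
proof -
  obtain x where x: "x \<in> vertices (M (Suc i))" "v \<subseteq> x"
    using leaf_below_vertex[of "Suc i"] assms by auto
  obtain k where created: "\<Union> (set (Vs!i)) = sliced i"
    and new_vertices: "vertices (M (Suc i)) = (vertices (M i) - {sliced i}) \<union> set (Vs!i)"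
    and "sliced i \<in> vertices (M i)"
    using slicing_step[OF assms(1)] by metis
  show ?thesis
  proof (cases "x \<in> set (Vs!i)")
    case True
    then show ?thesis using x(2) created by blast
  next
    case False
    then have "x \<inter> sliced i = {}"
      using vertices_M_disjoint[of i x "sliced i"] x(1) new_vertices \<open>sliced i \<in> vertices (M i)\<close> assms(1)
      by auto
    moreover have "v \<noteq> {}" using vertex_nonempty assms(2) .
    ultimately show ?thesis using x(2) created by blast
  qed
qed

lemma raw_labels_Suc:
  "i < r \<Longrightarrow> raw_labels Vs v (Suc i) \<longleftrightarrow> (\<exists>z\<in>set (Vs!i). v \<subseteq> z)"
  by (simp add: raw_labels_def length_Vs)


definition carrier :: "nat \<Rightarrow> (nat set \<Rightarrow> nat \<Rightarrow> bool) \<Rightarrow> nat set \<Rightarrow> nat set \<Rightarrow> bool" where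
  "carrier j lab x \<rho> \<longleftrightarrow> \<rho> \<in> leaves \<and> \<rho> \<subseteq> x \<and>
     (\<forall>v\<in>leaves. v \<subseteq> x \<longrightarrow> (\<forall>s\<le>j. lab v s \<longleftrightarrow> raw_labels Vs v s \<and> v = \<rho>))"

text \<open>After the reductions at r, ..., j+1, below each vertex of M j the labels at coordinates
  \<le> j sit on a single leaf.\<close>
definition concentrated :: "nat \<Rightarrow> (nat set \<Rightarrow> nat \<Rightarrow> bool) \<Rightarrow> bool" where
  "concentrated j lab \<longleftrightarrow> (\<forall>x\<in>vertices (M j). \<exists>\<rho>. carrier j lab x \<rho>)"

lemma carrierD:
  "carrier j lab x \<rho> \<Longrightarrow> v \<in> leaves \<Longrightarrow> v \<subseteq> x \<Longrightarrow> s \<le> j \<Longrightarrow>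
     lab v s \<longleftrightarrow> raw_labels Vs v s \<and> v = \<rho>"
  unfolding carrier_def by blast

lemma concentrated_raw_labels: "concentrated r (raw_labels Vs)"
proof -
  have "v = x" if "v \<in> leaves" "x \<in> leaves" "v \<subseteq> x" for v x
    using vertices_M_disjoint[of r v x] vertex_nonempty[OF that(1)] that by blast
  then have "carrier r (raw_labels Vs) x x" if "x \<in> leaves" for x
    using that unfolding carrier_def by blast
  then show ?thesis unfolding concentrated_def by blast
qed

lemma concentrated_label_raw:
  assumes "concentrated j lab" "j \<le> r" "v \<in> leaves" "s \<le> j" "lab v s"
  shows "raw_labels Vs v s"
proof -
  obtain x \<rho> where "x \<in> vertices (M j)" "v \<subseteq> x" "carrier j lab x \<rho>"
    using leaf_below_vertex[OF assms(2,3)] assms(1) unfolding concentrated_def by blast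
  with assms(3-5) show ?thesis using carrierD by blast
qed

lemma labelled_leaf_below_sliced:
  assumes "concentrated (Suc i) lab" "i < r" "v \<in> leaves" "lab v (Suc i)"
  shows "v \<subseteq> sliced i"
  using concentrated_label_raw[OF assms(1) _ assms(3) order.refl assms(4)] assms(2)
    raw_labels_Suc[OF assms(2)] leaf_below_created_iff[OF assms(2,3)] by simp

text \<open>Each created vertex of the i-th slicing carries exactly one leaf labelled at i+1.\<close>
lemma card_labelled_leaves:
  assumes "concentrated (Suc i) lab" "i < r"
  shows "card {v\<in>leaves. lab v (Suc i)} = length (Vs!i)"
proof -
  define f where "f z = (SOME \<rho>. carrier (Suc i) lab z \<rho>)" for z
  have created: "set (Vs!i) \<subseteq> vertices (M (Suc i))" "distinct (Vs!i)"
    using slicing_step[OF assms(2)] by blast+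
  have f: "carrier (Suc i) lab z (f z)" if "z \<in> set (Vs!i)" for z
    using assms(1) created(1) that unfolding concentrated_def f_def by (blast intro: someI_ex)
  then have f_leaf: "f z \<in> leaves" "f z \<subseteq> z" if "z \<in> set (Vs!i)" for z
    using that unfolding carrier_def by auto
  have "{v\<in>leaves. lab v (Suc i)} = f ` set (Vs!i)"
  proof (intro equalityI subsetI)
    fix v assume "v \<in> {v\<in>leaves. lab v (Suc i)}"
    then have v: "v \<in> leaves" "lab v (Suc i)" by auto
    then have "raw_labels Vs v (Suc i)"
      using concentrated_label_raw[OF assms(1)] assms(2) by simp
    then obtain z where z: "z \<in> set (Vs!i)" "v \<subseteq> z"
      using raw_labels_Suc[OF assms(2)] by blast
    then have "v = f z" using carrierD[OF f[OF z(1)] v(1) z(2) order.refl] v(2) by blast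
    then show "v \<in> f ` set (Vs!i)" using z(1) by blast
  next
    fix w assume "w \<in> f ` set (Vs!i)"
    then obtain z where z: "z \<in> set (Vs!i)" "w = f z" by blast
    then have "raw_labels Vs w (Suc i)" using f_leaf raw_labels_Suc[OF assms(2)] by blast
    then show "w \<in> {v\<in>leaves. lab v (Suc i)}"
      using carrierD[OF f[OF z(1)] f_leaf[OF z(1)] order.refl] z(2) f_leaf(1)[OF z(1)] by simp
  qed
  moreover have "inj_on f (set (Vs!i))"
  proof (rule inj_onI)
    fix z z' assume "z \<in> set (Vs!i)" "z' \<in> set (Vs!i)" "f z = f z'"
    moreover have "f z \<noteq> {}" using f_leaf(1)[OF \<open>z \<in> set (Vs!i)\<close>] by (rule vertex_nonempty)
    ultimately have "z \<inter> z' \<noteq> {}" using f_leaf(2) by blast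
    then show "z = z'"
      using vertices_M_disjoint[of "Suc i" z z'] created(1) \<open>z \<in> set (Vs!i)\<close> \<open>z' \<in> set (Vs!i)\<close>
        assms(2) by auto
  qed
  ultimately show ?thesis by (simp add: card_image distinct_card[OF created(2)])
qed


lemma carrier_red_step_untouched:
  assumes "i < r" "concentrated (Suc i) lab" "x \<in> vertices (M i)" "x \<noteq> sliced i"
  shows "\<exists>\<rho>. carrier i (red_step (M r) (Suc i) lab) x \<rho>"
proof -
  have x: "x \<in> vertices (M (Suc i))" "x \<inter> sliced i = {}"
    using slicing_step[OF assms(1)] vertices_M_disjoint[of i] assms by auto
  then obtain \<rho> where \<rho>: "carrier (Suc i) lab x \<rho>"
    using assms(2) unfolding concentrated_def by blast
  have "\<not> lab v (Suc i)" if "v \<in> leaves" "v \<subseteq> x" for v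
  proof
    assume "lab v (Suc i)"
    then have "v \<subseteq> sliced i" by (rule labelled_leaf_below_sliced[OF assms(2,1) that(1)])
    then show False using x(2) that vertex_nonempty by blast
  qed
  then have "carrier i (red_step (M r) (Suc i) lab) x \<rho>"
    using \<rho> unfolding carrier_def by (auto simp: red_step_below regular_at_def)
  then show ?thesis ..
qed

text \<open>In the sliced vertex only the <_gamma-first leaf labelled at i+1 survives the reduction.\<close>
lemma carrier_red_step_sliced:
  assumes "i < r" "concentrated (Suc i) lab"
  shows "\<exists>\<rho>. carrier i (red_step (M r) (Suc i) lab) (sliced i) \<rho>"
proof -
  obtain k where created: "set (Vs!i) \<subseteq> vertices (M (Suc i))" "length (Vs!i) = 2*k+1"
    using slicing_step[OF assms(1)] by metis
  have carrier_created: "\<exists>\<rho>. carrier (Suc i) lab z \<rho>" if "z \<in> set (Vs!i)" for z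
    using assms(2) created(1) that unfolding concentrated_def by blast
  have "Vs!i!0 \<in> set (Vs!i)" using created(2) by simp
  then obtain \<rho>0 where \<rho>0: "carrier (Suc i) lab (Vs!i!0) \<rho>0"
    using carrier_created by blast
  then have "\<rho>0 \<in> leaves" "raw_labels Vs \<rho>0 (Suc i)"
    using \<open>Vs!i!0 \<in> set (Vs!i)\<close> raw_labels_Suc[OF assms(1)] unfolding carrier_def by auto
  then have "lab \<rho>0 (Suc i)"
    using \<rho>0 unfolding carrier_def by blast
  then obtain \<rho> where \<rho>: "\<rho> \<in> leaves" "lab \<rho> (Suc i)"
    and regular: "\<And>v. v \<in> leaves \<Longrightarrow> lab v (Suc i) \<Longrightarrow> regular_at (M r) lab (Suc i) v \<longleftrightarrow> v \<noteq> \<rho>"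
    using first_labelled_vertex[OF unicellular_M[OF order.refl] \<open>\<rho>0 \<in> leaves\<close>] by blast
  have \<rho>_below: "\<rho> \<subseteq> sliced i" using labelled_leaf_below_sliced[OF assms(2,1) \<rho>] .
  have "red_step (M r) (Suc i) lab v s \<longleftrightarrow> raw_labels Vs v s \<and> v = \<rho>"
    if v: "v \<in> leaves" "v \<subseteq> sliced i" and s: "s \<le> i" for v s
  proof -
    obtain z where z: "z \<in> set (Vs!i)" "v \<subseteq> z"
      using leaf_below_created_iff[OF assms(1) v(1)] v(2) by blast
    then obtain \<rho>z where \<rho>z: "carrier (Suc i) lab z \<rho>z"
      using carrier_created by blast
    have "raw_labels Vs v (Suc i)" using raw_labels_Suc[OF assms(1)] z by blast
    then have "lab v (Suc i) \<longleftrightarrow> v = \<rho>z" "lab v s \<longleftrightarrow> raw_labels Vs v s \<and> v = \<rho>z"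
      using carrierD[OF \<rho>z v(1) z(2)] s by auto
    then show ?thesis
      using regular[OF v(1)] s \<rho>(2) by (auto simp: red_step_below)
  qed
  then have "carrier i (red_step (M r) (Suc i) lab) (sliced i) \<rho>"
    unfolding carrier_def using \<rho>(1) \<rho>_below by blast
  then show ?thesis ..
qed

lemma concentrated_red_step:
  assumes "i < r" "concentrated (Suc i) lab"
  shows "concentrated i (red_step (M r) (Suc i) lab)"
  unfolding concentrated_def
  using carrier_red_step_untouched[OF assms] carrier_red_step_sliced[OF assms] by blast


definition reduction_invariant :: "nat \<Rightarrow> (nat set \<Rightarrow> nat \<Rightarrow> bool) \<Rightarrow> bool" where
  "reduction_invariant j lab \<longleftrightarrow> concentrated j lab \<and>
     (\<forall>s. j < s \<and> s \<le> r \<longrightarrow> card {v\<in>leaves. lab v s} = length (Vs!(s-1))) \<and>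
     (\<forall>h i. 1 \<le> h \<and> h < i \<and> j < i \<and> i \<le> r \<longrightarrow> overlap_minimal (M r) lab h i)"

lemma reduction_invariant_raw_labels: "reduction_invariant r (raw_labels Vs)"
  unfolding reduction_invariant_def using concentrated_raw_labels by auto

lemma reduction_invariant_red_step:
  assumes "i < r" "reduction_invariant (Suc i) lab"
  shows "reduction_invariant i (red_step (M r) (Suc i) lab)"
proof -
  let ?lab = "red_step (M r) (Suc i) lab"
  have conc: "concentrated (Suc i) lab"
    and count: "\<And>s. Suc i < s \<Longrightarrow> s \<le> r \<Longrightarrow> card {v\<in>leaves. lab v s} = length (Vs!(s-1))"
    and overlap: "\<And>h j. 1 \<le> h \<Longrightarrow> h < j \<Longrightarrow> Suc i < j \<Longrightarrow> j \<le> r \<Longrightarrow> overlap_minimal (M r) lab h j"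
    using assms(2) unfolding reduction_invariant_def by auto
  have same: "?lab v s = lab v s" if "Suc i \<le> s" for v s
    using that by (simp add: red_step_above)
  have "card {v\<in>leaves. ?lab v s} = length (Vs!(s-1))" if "i < s" "s \<le> r" for s
  proof (cases "s = Suc i")
    case True
    then show ?thesis using same card_labelled_leaves[OF conc assms(1)] by simp
  next
    case False
    with that show ?thesis using same count by simp
  qed
  moreover have "overlap_minimal (M r) ?lab h j" if "1 \<le> h" "h < j" "i < j" "j \<le> r" for h j
  proof (cases "j = Suc i")
    case True
    then show ?thesis using overlap_minimal_red_step[OF unicellular_M[OF order.refl]] that(2) by simp
  next
    case False
    then have "Suc i < j" using that(3) by simp
    then show ?thesis
      by (intro overlap_minimal_mono[OF overlap[of h j]]) (use that same red_step_le in auto)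
  qed
  ultimately show ?thesis
    unfolding reduction_invariant_def using concentrated_red_step[OF assms(1) conc] by blast
qed

lemma reduction_invariant_induced_labels: "reduction_invariant 1 (induced_labels (M r) Vs)"
  unfolding induced_labels_def length_Vs
  using one_le_length_ts reduction_invariant_raw_labels reduction_invariant_red_step
  by (rule red_from_induct) simp

lemma card_induced_labels:
  assumes "h \<in> {1..r}"
  shows "card {v\<in>leaves. induced_labels (M r) Vs v h} = length (Vs!(h-1))"
proof (cases "h = 1")
  case True
  have "concentrated (Suc 0) (induced_labels (M r) Vs)"
    using reduction_invariant_induced_labels unfolding reduction_invariant_def by simp
  moreover have "0 < r" using one_le_length_ts by linarith
  ultimately show ?thesis using True card_labelled_leaves[of 0] by simp
next
  case False
  with assms show ?thesis
    using reduction_invariant_induced_labels unfolding reduction_invariant_def by simp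
qed

lemma lambda_tree_induced_labels:
  "lambda_tree (genus (M 0)) r (M r) (induced_labels (M r) Vs)"
proof -
  let ?lab = "induced_labels (M r) Vs"
  have g: "(\<Sum>i<r. length (Vs!i)) = 2 * genus (M 0) + r" "r \<le> genus (M 0)"
    using created_count_genus[of r] genus_last by auto
  have "(\<Sum>v\<in>leaves. card {h\<in>{1..r}. ?lab v h}) = (\<Sum>h\<in>{1..r}. card {v\<in>leaves. ?lab v h})"
    by (simp add: sum_card_filter_swap finite_vertices)
  also have "\<dots> = (\<Sum>h\<in>{1..r}. length (Vs!(h-1)))"
    using card_induced_labels by simp
  also have "\<dots> = 2 * genus (M 0) + r"
    using g(1) by (simp add: sum.atLeast1_atMost_eq)
  finally have sum: "(\<Sum>v\<in>leaves. card {h\<in>{1..r}. ?lab v h}) = 2 * genus (M 0) + r" .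
  have odd: "odd (card {v\<in>leaves. ?lab v h})" if "h \<in> {1..r}" for h
  proof -
    have "h - 1 < r" using that by auto
    then obtain k where "length (Vs!(h-1)) = 2*k+1" by (rule slicing_step)
    then show ?thesis using card_induced_labels[OF that] by simp
  qed
  have "overlap_minimal (M r) ?lab h i" if "1 \<le> h" "h < i" "i \<le> r" for h i
    using reduction_invariant_induced_labels that unfolding reduction_invariant_def by simp
  then show ?thesis
    unfolding lambda_tree_def overlap_minimal_def[symmetric]
    using unicellular_M[OF order.refl] genus_last one_le_length_ts g(2) sum odd by simp
qed

end

theorem lemma1:
  fixes Xi :: "umap \<Rightarrow> nat \<Rightarrow> umap \<times> nat set list"
    and m :: umap and g :: nat
    and ms :: "umap list" and ts :: "nat list" and Vs :: "nat set list list"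
  assumes "slicing_map Xi"
    and "unicellular m" and "genus m = g" and "g \<ge> 1"
    and "blueprint Xi m ms ts Vs"
  shows "1 \<le> length ts \<and> length ts \<le> g \<and>
         lambda_tree g (length ts) (ms ! length ts) (induced_labels (ms ! length ts) Vs)"
proof -
  have "ms ! 0 = m" using assms(5) unfolding blueprint_def by simp
  then interpret blueprint_seq Xi ms ts Vs
    using assms by unfold_locales simp_all
  show ?thesis
    using lambda_tree_induced_labels \<open>ms ! 0 = m\<close> assms(3) unfolding lambda_tree_def by simp
qed

end
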